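(* Let $q=p^f$ with $p$ prime, and let $R=\mathbb F_{q^2}+\mathbb F_{q^2}u$ with $u^2=0$ and $ua=a^qu$ for $a\in\mathbb F_{q^2}$. Let $\rho=(R,R,\beta,\Phi)$ with $\beta$ and $\Phi$ as defined below. Then $\rho$ is a form ring (with $\beta$ admissible, associated anti-automorphism $(r+su)^J=r-s^qu$ and $\beta(v,w)=\beta(w,-v)$), and a left $R$-submodule $C\le R^N$ is a code of Type $\rho$ if and only if $C=C^{\perp_H}$, where $C^{\perp_H}=\{x\in R^N:\sum_{i=1}^N x_i\overline{c_i}=0\ \forall c\in C\}$ and $\overline{a+bu}:=a^q-bu$.
   Context: $\beta:R\times R\to\tfrac1p\mathbb Z/\mathbb Z$, $\beta(a'+b'u,a+bu):=\tfrac1p\mathrm{Tr}(ab'-a'b)$ with $\mathrm{Tr}$ the trace $\mathbb F_{q^2}\to\mathbb F_p\cong\mathbb Z/p\mathbb Z$. $\phi_0:R\to\tfrac1p\mathbb Z/\mathbb Z$, $\phi_0(a+bu):=\tfrac1p\mathrm{Tr}_{\mathbb F_q/\mathbb F_p}(a\,a^q)$, and $\Phi$ is the subgroup of maps $R\to\mathbb Q/\mathbb Z$ generated by $\{\phi_0[r]:r\in R\}$, where $(\phi[r])(v)=\phi(rv)$. General definitions: for a finite ring $R$ and finite left module $V$, $\beta:V\times V\to\mathbb Q/\mathbb Z$ biadditive is admissible if $v\mapsto\beta(v,\cdot)$ is an isomorphism $V\to\mathrm{Hom}(V,\mathbb Q/\mathbb Z)$, the set $M=\{\beta_r:r\in R\}$,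 $\beta_r(v,w)=\beta(v,rw)$, is closed under $\beta\mapsto\beta^\tau$, $\beta^\tau(v,w)=\beta(w,v)$, and $r\mapsto\beta_r$ is bijective; $J$ is defined by $\beta(rv,w)=\beta(v,r^Jw)$. $\mathrm{Quad}_0(V,\mathbb Q/\mathbb Z)$ is the group of maps $\phi$ with $\phi(0)=0$ and $\phi(x+y+z)-\phi(x+y)-\phi(x+z)-\phi(y+z)+\phi(x)+\phi(y)+\phi(z)=0$; $\{\!\{\beta\}\!\}(v)=\beta(v,v)$, $\lambda(\phi)(v,w)=\phi(v+w)-\phi(v)-\phi(w)$. A form ring is $(R,V,\beta,\Phi)$ with $\beta$ admissible and $\Phi\le\mathrm{Quad}_0$ a subgroup closed under all $\phi\mapsto\phi[r]$, with $\{\!\{M\}\!\}\subseteq\Phi$ and $\lambda(\Phi)\subseteq M$. A code of Type $\rho$ is a left submodule $C\le V^N$ with $C=\{x:\sum_i\beta(x_i,c_i)=0\ \forall c\in C\}$ and $\sum_i\phi(c_i)=0$ for all $c\in C,\phi\in\Phi$. *)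

theory Defs
  imports Complex_Main "HOL-Library.Product_Plus" "HOL-Computational_Algebra.Primes"
begin

definition qz_rel :: "rat \<Rightarrow> rat \<Rightarrow> bool" where
  "qz_rel x y \<longleftrightarrow> x - y \<in> \<int>"

lemma qz_rel_equivp: "equivp qz_rel"
proof (rule equivpI)
  show "reflp qz_rel" by (auto simp: reflp_def qz_rel_def)
  show "symp qz_rel" unfolding symp_def qz_rel_def
    by (metis Ints_minus minus_diff_eq)
  show "transp qz_rel" unfolding transp_def qz_rel_def
    by (metis Ints_add diff_add_cancel add_diff_eq diff_add_eq)
qed

quotient_type qz = rat / qz_rel
  by (rule qz_rel_equivp)

instantiation qz :: ab_group_add
begin
lift_definition zero_qz :: qz is "0::rat" .
lift_definition plus_qz :: "qz \<Rightarrow> qz \<Rightarrow> qz" is "(+)"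
  unfolding qz_rel_def
  by (metis Ints_add add_diff_add)
lift_definition uminus_qz :: "qz \<Rightarrow> qz" is "uminus"
  unfolding qz_rel_def by (metis Ints_minus minus_diff_eq minus_diff_minus)
lift_definition minus_qz :: "qz \<Rightarrow> qz \<Rightarrow> qz" is "(-)"
  unfolding qz_rel_def
  by (metis Ints_diff diff_diff_eq2 diff_add_eq add_diff_add diff_conv_add_uminus add_uminus_conv_diff
        minus_diff_eq diff_add_cancel)
instance
  by standard (transfer; simp add: qz_rel_def algebra_simps)+
end

definition qz_of :: "rat \<Rightarrow> qz" where "qz_of = abs_qz"

definition ring_on :: "('r::ab_group_add \<Rightarrow> 'r \<Rightarrow> 'r) \<Rightarrow> 'r \<Rightarrow> bool" where
  "ring_on rmul one \<longleftrightarrow>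
     (\<forall>a b c. rmul (rmul a b) c = rmul a (rmul b c)) \<and>
     (\<forall>a b c. rmul a (b + c) = rmul a b + rmul a c) \<and>
     (\<forall>a b c. rmul (a + b) c = rmul a c + rmul b c) \<and>
     (\<forall>a. rmul one a = a \<and> rmul a one = a)"

definition left_module_on ::
  "('r::ab_group_add \<Rightarrow> 'r \<Rightarrow> 'r) \<Rightarrow> 'r \<Rightarrow> ('r \<Rightarrow> 'v::ab_group_add \<Rightarrow> 'v) \<Rightarrow> bool" where
  "left_module_on rmul one smul \<longleftrightarrow>
     ring_on rmul one \<and>
     (\<forall>r s v. smul (rmul r s) v = smul r (smul s v)) \<and>
     (\<forall>r v w. smul r (v + w) = smul r v + smul r w) \<and>
     (\<forall>r s v. smul (r + s) v = smul r v + smul s v) \<and>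
     (\<forall>v. smul one v = v)"

definition additive_hom :: "('v::ab_group_add \<Rightarrow> qz) \<Rightarrow> bool" where
  "additive_hom \<chi> \<longleftrightarrow> (\<forall>x y. \<chi> (x + y) = \<chi> x + \<chi> y)"

definition biadditive :: "('v::ab_group_add \<Rightarrow> 'v \<Rightarrow> qz) \<Rightarrow> bool" where
  "biadditive \<beta> \<longleftrightarrow> (\<forall>v. additive_hom (\<beta> v)) \<and> (\<forall>w. additive_hom (\<lambda>v. \<beta> v w))"

definition beta_r :: "('r \<Rightarrow> 'v \<Rightarrow> 'v) \<Rightarrow> ('v \<Rightarrow> 'v \<Rightarrow> qz) \<Rightarrow> 'r \<Rightarrow> 'v \<Rightarrow> 'v \<Rightarrow> qz" where
  "beta_r smul \<beta> r = (\<lambda>v w. \<beta> v (smul r w))"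

definition transp_form :: "('v \<Rightarrow> 'v \<Rightarrow> qz) \<Rightarrow> 'v \<Rightarrow> 'v \<Rightarrow> qz" where
  "transp_form \<beta> = (\<lambda>v w. \<beta> w v)"

definition forms_M :: "('r \<Rightarrow> 'v \<Rightarrow> 'v) \<Rightarrow> ('v \<Rightarrow> 'v \<Rightarrow> qz) \<Rightarrow> ('v \<Rightarrow> 'v \<Rightarrow> qz) set" where
  "forms_M smul \<beta> = range (beta_r smul \<beta>)"

definition admissible ::
  "('r \<Rightarrow> 'v::ab_group_add \<Rightarrow> 'v) \<Rightarrow> ('v \<Rightarrow> 'v \<Rightarrow> qz) \<Rightarrow> bool" where
  "admissible smul \<beta> \<longleftrightarrow>
     biadditive \<beta> \<and>
     bij_betw \<beta> UNIV {\<chi>. additive_hom \<chi>} \<and>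
     (\<forall>m \<in> forms_M smul \<beta>. transp_form m \<in> forms_M smul \<beta>) \<and>
     bij_betw (beta_r smul \<beta>) UNIV (forms_M smul \<beta>)"

definition Quad0 :: "('v::ab_group_add \<Rightarrow> qz) set" where
  "Quad0 = {\<phi>. \<phi> 0 = 0 \<and>
     (\<forall>x y z. \<phi> (x + y + z) - \<phi> (x + y) - \<phi> (x + z) - \<phi> (y + z)
               + \<phi> x + \<phi> y + \<phi> z = 0)}"

definition diag_form :: "('v \<Rightarrow> 'v \<Rightarrow> qz) \<Rightarrow> 'v \<Rightarrow> qz" where
  "diag_form \<beta> = (\<lambda>v. \<beta> v v)"

definition lambda_q :: "('v::ab_group_add \<Rightarrow> qz) \<Rightarrow> 'v \<Rightarrow> 'v \<Rightarrow> qz" where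
  "lambda_q \<phi> = (\<lambda>v w. \<phi> (v + w) - \<phi> v - \<phi> w)"

definition phi_r :: "('r \<Rightarrow> 'v \<Rightarrow> 'v) \<Rightarrow> ('v \<Rightarrow> qz) \<Rightarrow> 'r \<Rightarrow> 'v \<Rightarrow> qz" where
  "phi_r smul \<phi> r = (\<lambda>v. \<phi> (smul r v))"

definition is_subgroup_fun :: "('v \<Rightarrow> qz) set \<Rightarrow> bool" where
  "is_subgroup_fun \<Phi> \<longleftrightarrow> (\<lambda>_. 0) \<in> \<Phi> \<and>
     (\<forall>\<phi>\<in>\<Phi>. \<forall>\<psi>\<in>\<Phi>. (\<lambda>v. \<phi> v - \<psi> v) \<in> \<Phi>)"

definition form_ring ::
  "('r::ab_group_add \<Rightarrow> 'r \<Rightarrow> 'r) \<Rightarrow> 'r \<Rightarrow> ('r \<Rightarrow> 'v::ab_group_add \<Rightarrow> 'v)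
   \<Rightarrow> ('v \<Rightarrow> 'v \<Rightarrow> qz) \<Rightarrow> ('v \<Rightarrow> qz) set \<Rightarrow> bool" where
  "form_ring rmul one smul \<beta> \<Phi> \<longleftrightarrow>
     left_module_on rmul one smul \<and>
     admissible smul \<beta> \<and>
     \<Phi> \<subseteq> Quad0 \<and> is_subgroup_fun \<Phi> \<and>
     (\<forall>\<phi>\<in>\<Phi>. \<forall>r. phi_r smul \<phi> r \<in> \<Phi>) \<and>
     diag_form ` forms_M smul \<beta> \<subseteq> \<Phi> \<and>
     lambda_q ` \<Phi> \<subseteq> forms_M smul \<beta>"

inductive_set gen_subgroup :: "('v \<Rightarrow> qz) set \<Rightarrow> ('v \<Rightarrow> qz) set" for S where
  gen_base: "\<phi> \<in> S \<Longrightarrow> \<phi> \<in> gen_subgroup S"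
| gen_zero: "(\<lambda>_. 0) \<in> gen_subgroup S"
| gen_diff: "\<phi> \<in> gen_subgroup S \<Longrightarrow> \<psi> \<in> gen_subgroup S \<Longrightarrow> (\<lambda>v. \<phi> v - \<psi> v) \<in> gen_subgroup S"

text \<open>Left submodules of \<open>V^N\<close>, with \<open>N = CARD('n)\<close>.\<close>
definition left_submodule :: "('r \<Rightarrow> 'v::ab_group_add \<Rightarrow> 'v) \<Rightarrow> ('n \<Rightarrow> 'v) set \<Rightarrow> bool" where
  "left_submodule smul C \<longleftrightarrow> (\<lambda>_. 0) \<in> C \<and>
     (\<forall>x\<in>C. \<forall>y\<in>C. (\<lambda>i. x i + y i) \<in> C) \<and>
     (\<forall>r. \<forall>x\<in>C. (\<lambda>i. smul r (x i)) \<in> C)"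

definition is_code_of_type ::
  "('r \<Rightarrow> 'v::ab_group_add \<Rightarrow> 'v) \<Rightarrow> ('v \<Rightarrow> 'v \<Rightarrow> qz) \<Rightarrow> ('v \<Rightarrow> qz) set
   \<Rightarrow> ('n::finite \<Rightarrow> 'v) set \<Rightarrow> bool" where
  "is_code_of_type smul \<beta> \<Phi> C \<longleftrightarrow>
     left_submodule smul C \<and>
     C = {x. \<forall>c\<in>C. (\<Sum>i\<in>UNIV. \<beta> (x i) (c i)) = 0} \<and>
     (\<forall>c\<in>C. \<forall>\<phi>\<in>\<Phi>. (\<Sum>i\<in>UNIV. \<phi> (c i)) = 0)"

text \<open>Elements \<open>a + b u\<close> of \<open>R\<close> are represented as pairs \<open>(a, b)\<close>; addition is
  componentwise. Multiplication uses \<open>u^2 = 0\<close>, \<open>u c = c^q u\<close>: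
  \<open>(a + b u)(c + d u) = a c + (a d + b c^q) u\<close>.\<close>
definition Rmult :: "nat \<Rightarrow> 'a::field \<times> 'a \<Rightarrow> 'a \<times> 'a \<Rightarrow> 'a \<times> 'a" where
  "Rmult q x y = (fst x * fst y, fst x * snd y + snd x * (fst y) ^ q)"

definition Rone :: "'a::field \<times> 'a" where "Rone = (1, 0)"

definition trace_to_prime :: "nat \<Rightarrow> nat \<Rightarrow> 'a::field \<Rightarrow> 'a" where
  "trace_to_prime p n x = (\<Sum>i<n. x ^ (p ^ i))"

definition prime_field_nat :: "nat \<Rightarrow> 'a::field \<Rightarrow> nat" where
  "prime_field_nat p y = (THE k. k < p \<and> of_nat k = y)"

definition fp_to_qz :: "nat \<Rightarrow> 'a::field \<Rightarrow> qz" where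
  "fp_to_qz p y = qz_of (of_nat (prime_field_nat p y) / of_nat p)"

text \<open>\<open>\<beta>(a'+b'u, a+bu) = (1/p) Tr(a b' - a' b)\<close>, trace \<open>F_{q^2} \<rightarrow> F_p\<close>, \<open>q = p^f\<close>.\<close>
definition beta_R :: "nat \<Rightarrow> nat \<Rightarrow> 'a::field \<times> 'a \<Rightarrow> 'a \<times> 'a \<Rightarrow> qz" where
  "beta_R p f v w = fp_to_qz p (trace_to_prime p (2 * f) (fst w * snd v - fst v * snd w))"

text \<open>\<open>\<phi>_0(a+bu) = (1/p) Tr_{F_q/F_p}(a a^q)\<close>.\<close>
definition phi0_R :: "nat \<Rightarrow> nat \<Rightarrow> 'a::field \<times> 'a \<Rightarrow> qz" where
  "phi0_R p f v = fp_to_qz p (trace_to_prime p f (fst v * fst v ^ (p ^ f)))"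

definition Phi_R :: "nat \<Rightarrow> nat \<Rightarrow> ('a::field \<times> 'a \<Rightarrow> qz) set" where
  "Phi_R p f = gen_subgroup {phi_r (Rmult (p ^ f)) (phi0_R p f) r | r. True}"

definition J_R :: "nat \<Rightarrow> 'a::field \<times> 'a \<Rightarrow> 'a \<times> 'a" where
  "J_R q x = (fst x, - (snd x ^ q))"

definition Rconj :: "nat \<Rightarrow> 'a::field \<times> 'a \<Rightarrow> 'a \<times> 'a" where
  "Rconj q x = (fst x ^ q, - snd x)"

definition herm_dual :: "nat \<Rightarrow> ('n::finite \<Rightarrow> 'a::field \<times> 'a) set \<Rightarrow> ('n \<Rightarrow> 'a \<times> 'a) set" where
  "herm_dual q C = {x. \<forall>c\<in>C. (\<Sum>i\<in>UNIV. Rmult q (x i) (Rconj q (c i))) = 0}"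

end

theory Submission
  imports Defs "HOL-Number_Theory.Residues" "HOL-Computational_Algebra.Polynomial"
begin

text \<open>Write \<open>F\<close> for the field of order \<open>q\<^sup>2\<close> and \<open>N(a) = a\<^sup>q\<^sup>+\<^sup>1\<close> for the norm onto \<open>F\<^sub>q\<close>.
  The form \<open>\<beta>\<close> is the trace pairing of \<open>F\<close> followed by the character \<open>Tr/p\<close>, hence
  nondegenerate, and a character-sum argument turns nondegeneracy into admissibility.
  The generators \<open>\<phi>\<^sub>0[r]\<close> of \<open>\<Phi>\<close> are the maps \<open>a + bu \<mapsto> Tr\<^sub>F\<^sub>q(m N(a))/p\<close> with \<open>m\<close> a norm;
  such a map polarises to a form \<open>\<beta>\<^sub>r\<close>, and conversely every diagonal \<open>\<beta>\<^sub>r(v,v)\<close> is such a map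
  for some \<open>m \<in> F\<^sub>q\<close>, which is a norm because \<open>N\<close> is surjective. For codes, \<open>R\<close>-linearity of \<open>C\<close>
  turns \<open>\<beta>\<close>-orthogonality into vanishing of the Hermitian products \<open>\<Sum>\<^sub>i x\<^sub>i conj(c\<^sub>i)\<close>,
  and on a Hermitian self-dual code every generator of \<open>\<Phi>\<close> sums to \<open>Tr(m \<Sum>\<^sub>i N(c\<^sub>i))/p = 0\<close>,
  since \<open>\<Sum>\<^sub>i N(c\<^sub>i)\<close> is a component of \<open>\<Sum>\<^sub>i c\<^sub>i conj(c\<^sub>i) = 0\<close>.\<close>

section \<open>Characters of finite abelian groups with values in Q/Z\<close>

lift_definition qz_exp :: "qz \<Rightarrow> complex" is "\<lambda>r. cis (2 * pi * of_rat r)"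
proof -
  fix x y :: rat
  assume "qz_rel x y"
  then obtain n where "x - y = of_int n"
    unfolding qz_rel_def by (auto elim: Ints_cases)
  then have "of_rat x = of_rat y + (of_int n :: real)"
    by (metis add.commute diff_add_cancel of_rat_add of_rat_of_int_eq)
  then have "cis (2 * pi * of_rat x) = cis (2 * pi * of_rat y) * cis (2 * pi * of_int n)"
    by (simp add: cis_mult algebra_simps)
  then show "cis (2 * pi * of_rat x) = cis (2 * pi * of_rat y)"
    by simp
qed

lemma qz_exp_add: "qz_exp (a + b) = qz_exp a * qz_exp b"
  by transfer (simp add: cis_mult of_rat_add algebra_simps)

lemma qz_exp_zero [simp]: "qz_exp 0 = 1"
  by transfer simp

lemma qz_exp_eq_1_iff: "qz_exp a = 1 \<longleftrightarrow> a = 0"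
proof
  show "qz_exp a = 1 \<Longrightarrow> a = 0"
  proof transfer
    fix r :: rat
    assume "cis (2 * pi * of_rat r) = 1"
    then have "cos (2 * pi * of_rat r) = 1"
      by (metis cis.sel(1) one_complex.sel(1))
    then obtain n :: int where "2 * pi * of_rat r = of_int n * 2 * pi"
      by (auto simp: cos_one_2pi_int)
    then have "(of_rat r :: real) = of_rat (of_int n)"
      by simp
    then have "r = of_int n"
      by (simp only: of_rat_eq_iff)
    then show "qz_rel r 0"
      by (simp add: qz_rel_def)
  qed
qed simp

lemma qz_of_add: "qz_of (r + s) = qz_of r + qz_of s"
  unfolding qz_of_def by (simp add: plus_qz.abs_eq)

lemma qz_of_eq_iff: "qz_of r = qz_of s \<longleftrightarrow> r - s \<in> \<int>"
  unfolding qz_of_def by (simp add: qz.abs_eq_iff qz_rel_def)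

lemma qz_of_eq_0_iff: "qz_of r = 0 \<longleftrightarrow> r \<in> \<int>"
  using qz_of_eq_iff[of r 0] by (simp add: qz_of_def zero_qz.abs_eq)

lemma additive_hom_iff_additive: "additive_hom \<chi> \<longleftrightarrow> additive \<chi>"
  by (simp add: additive_hom_def additive_def)

lemma biadditive_iff_additive:
  "biadditive \<beta> \<longleftrightarrow> (\<forall>v. additive (\<beta> v)) \<and> (\<forall>w. additive (\<lambda>v. \<beta> v w))"
  by (simp add: biadditive_def additive_hom_iff_additive)

lemma sum_qz_exp_character_eq_0:
  fixes \<psi> :: "'v::{finite,ab_group_add} \<Rightarrow> qz"
  assumes "additive \<psi>" and "\<psi> v0 \<noteq> 0"
  shows "(\<Sum>v\<in>UNIV. qz_exp (\<psi> v)) = 0"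
proof -
  have "(\<Sum>v\<in>UNIV. qz_exp (\<psi> v)) = (\<Sum>v\<in>UNIV. qz_exp (\<psi> (v + v0)))"
    by (rule sum.reindex_bij_witness[of _ "\<lambda>v. v + v0" "\<lambda>v. v - v0"]) auto
  also have "\<dots> = qz_exp (\<psi> v0) * (\<Sum>v\<in>UNIV. qz_exp (\<psi> v))"
    by (simp add: additive.add[OF assms(1)] qz_exp_add sum_distrib_left mult.commute)
  finally have "(1 - qz_exp (\<psi> v0)) * (\<Sum>v\<in>UNIV. qz_exp (\<psi> v)) = 0"
    by (simp add: algebra_simps)
  then show ?thesis
    using assms(2) by (simp add: qz_exp_eq_1_iff)
qed

text \<open>Orthogonality of characters: if \<open>\<chi>\<close> differed from every \<open>\<beta> w\<close>, then
  \<open>\<Sum>\<^sub>w \<Sum>\<^sub>v e(\<chi> v - \<beta> w v)\<close> would vanish, whereas summing over \<open>w\<close> first leaves only the term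
  \<open>v = 0\<close> and gives \<open>|V|\<close>.\<close>
lemma character_in_range_if_nondegenerate:
  fixes \<beta> :: "'v::{finite,ab_group_add} \<Rightarrow> 'v \<Rightarrow> qz"
  assumes "biadditive \<beta>"
    and nondeg_right: "\<And>w. w \<noteq> 0 \<Longrightarrow> \<exists>v. \<beta> v w \<noteq> 0"
    and "additive \<chi>"
  shows "\<chi> \<in> range \<beta>"
proof (rule ccontr)
  assume not_in_range: "\<chi> \<notin> range \<beta>"
  have add_right: "additive (\<beta> v)" and add_left: "additive (\<lambda>v. \<beta> v w)" for v w
    using assms(1) by (simp_all add: biadditive_iff_additive)
  have inner: "(\<Sum>v\<in>UNIV. qz_exp (\<chi> v - \<beta> w v)) = 0" for w
  proof -
    obtain v0 where "\<chi> v0 \<noteq> \<beta> w v0"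
      using not_in_range by (metis ext rangeI)
    moreover have "additive (\<lambda>v. \<chi> v - \<beta> w v)"
      using assms(3) add_right[of w] by (simp add: additive_def)
    ultimately show ?thesis
      by (intro sum_qz_exp_character_eq_0[of _ v0]) simp_all
  qed
  have outer: "(\<Sum>w\<in>UNIV. qz_exp (- \<beta> w v)) = 0" if "v \<noteq> 0" for v
  proof -
    obtain w0 where "\<beta> w0 v \<noteq> 0"
      using nondeg_right[OF \<open>v \<noteq> 0\<close>] by blast
    moreover have "additive (\<lambda>w. - \<beta> w v)"
      using add_left[of v] by (simp add: additive_def)
    ultimately show ?thesis
      by (intro sum_qz_exp_character_eq_0[of _ w0]) simp_all
  qed
  have "0 = (\<Sum>w\<in>UNIV. \<Sum>v\<in>UNIV. qz_exp (\<chi> v - \<beta> w v))"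
    by (simp add: inner)
  also have "\<dots> = (\<Sum>v\<in>UNIV. qz_exp (\<chi> v) * (\<Sum>w\<in>UNIV. qz_exp (- \<beta> w v)))"
    by (subst sum.swap) (simp add: sum_distrib_left qz_exp_add[symmetric])
  also have "\<dots> = qz_exp (\<chi> 0) * (\<Sum>w\<in>UNIV. qz_exp (- \<beta> w 0))"
    by (subst sum.remove[of _ 0]) (simp_all add: outer)
  also have "\<dots> = of_nat (card (UNIV :: 'v set))"
    by (simp add: additive.zero[OF assms(3)] additive.zero[OF add_right])
  finally show False
    by simp
qed

lemma bij_betw_characters_if_nondegenerate:
  fixes \<beta> :: "'v::{finite,ab_group_add} \<Rightarrow> 'v \<Rightarrow> qz"
  assumes "biadditive \<beta>"
    and nondeg_left: "\<And>v. v \<noteq> 0 \<Longrightarrow> \<exists>w. \<beta> v w \<noteq> 0"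
    and nondeg_right: "\<And>w. w \<noteq> 0 \<Longrightarrow> \<exists>v. \<beta> v w \<noteq> 0"
  shows "bij_betw \<beta> UNIV {\<chi>. additive_hom \<chi>}"
proof -
  have add_right: "additive (\<beta> v)" and add_left: "additive (\<lambda>v. \<beta> v w)" for v w
    using assms(1) by (simp_all add: biadditive_iff_additive)
  have "inj \<beta>"
  proof (rule injI)
    fix v v'
    assume "\<beta> v = \<beta> v'"
    then have "\<beta> (v - v') w = 0" for w
      by (simp add: additive.diff[OF add_left])
    then show "v = v'"
      using nondeg_left[of "v - v'"] by auto
  qed
  moreover have "range \<beta> = {\<chi>. additive_hom \<chi>}"
    using add_right character_in_range_if_nondegenerate[OF assms(1) nondeg_right]
    by (auto simp: additive_hom_iff_additive)
  ultimately show ?thesis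
    by (simp add: bij_betw_def)
qed

section \<open>Form rings generated by a single quadratic map\<close>

lemma ring_on_one_right: "ring_on rmul e \<Longrightarrow> rmul a e = a"
  by (simp add: ring_on_def)

lemma left_module_on_additive:
  assumes "left_module_on rmul e smul"
  shows "additive (smul r)" and "additive (\<lambda>r. smul r v)"
  using assms by (simp_all add: left_module_on_def additive_def)

lemma
  assumes "left_module_on rmul e smul"
  shows left_module_on_minus_right: "smul r (- v) = - smul r v"
    and left_module_on_minus_left: "smul (- r) v = - smul r v"
  using additive.minus[OF left_module_on_additive(1)[OF assms]]
    additive.minus[OF left_module_on_additive(2)[OF assms]]
  by blast+

lemma left_module_on_assoc:
  "left_module_on rmul e smul \<Longrightarrow> smul (rmul r s) v = smul r (smul s v)"
  by (simp add: left_module_on_def)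

lemma transp_form_beta_r:
  assumes "left_module_on rmul e smul"
    and swap: "\<And>v w. \<beta> v w = \<beta> w (- v)"
    and adjoint: "\<And>r v w. \<beta> (smul r v) w = \<beta> v (smul (J r) w)"
  shows "transp_form (beta_r smul \<beta> r) = beta_r smul \<beta> (- J r)"
proof (intro ext)
  fix v w
  have "transp_form (beta_r smul \<beta> r) v w = \<beta> w (smul r v)"
    by (simp add: transp_form_def beta_r_def)
  also have "\<dots> = \<beta> (smul r v) (- w)"
    by (rule swap)
  also have "\<dots> = \<beta> v (smul (J r) (- w))"
    by (rule adjoint)
  also have "\<dots> = \<beta> v (smul (- J r) w)"
    using assms(1) by (simp add: left_module_on_minus_left left_module_on_minus_right)
  finally show "transp_form (beta_r smul \<beta> r) v w = beta_r smul \<beta> (- J r) v w"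
    by (simp add: beta_r_def)
qed

lemma inj_beta_r:
  assumes "ring_on rmul e" and "biadditive \<beta>"
    and nondeg_right: "\<And>w. w \<noteq> 0 \<Longrightarrow> \<exists>v. \<beta> v w \<noteq> 0"
  shows "inj (beta_r rmul \<beta>)"
proof (rule injI)
  fix r s
  assume "beta_r rmul \<beta> r = beta_r rmul \<beta> s"
  then have "\<beta> v r = \<beta> v s" for v
    by (metis beta_r_def ring_on_one_right[OF assms(1)])
  then have "\<beta> v (r - s) = 0" for v
    using assms(2) by (simp add: biadditive_iff_additive additive.diff)
  then show "r = s"
    using nondeg_right[of "r - s"] by auto
qed

lemma admissible_regular_if_nondegenerate:
  fixes \<beta> :: "'r::{finite,ab_group_add} \<Rightarrow> 'r \<Rightarrow> qz"
  assumes "left_module_on rmul e rmul" and "biadditive \<beta>"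
    and "\<And>v. v \<noteq> 0 \<Longrightarrow> \<exists>w. \<beta> v w \<noteq> 0"
    and "\<And>w. w \<noteq> 0 \<Longrightarrow> \<exists>v. \<beta> v w \<noteq> 0"
    and "\<And>v w. \<beta> v w = \<beta> w (- v)"
    and "\<And>r v w. \<beta> (rmul r v) w = \<beta> v (rmul (J r) w)"
  shows "admissible rmul \<beta>"
  unfolding admissible_def
proof (intro conjI ballI)
  show "bij_betw \<beta> UNIV {\<chi>. additive_hom \<chi>}"
    using assms(2-4) by (rule bij_betw_characters_if_nondegenerate)
  show "bij_betw (beta_r rmul \<beta>) UNIV (forms_M rmul \<beta>)"
    using inj_beta_r[OF _ assms(2,4)] assms(1)
    by (auto simp: bij_betw_def forms_M_def left_module_on_def)
  fix m
  assume "m \<in> forms_M rmul \<beta>"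
  then show "transp_form m \<in> forms_M rmul \<beta>"
    using transp_form_beta_r[OF assms(1,5,6)] by (auto simp: forms_M_def)
qed fact

lemma Quad0_iff_lambda_q_additive:
  "\<phi> \<in> Quad0 \<longleftrightarrow> \<phi> 0 = 0 \<and> (\<forall>w. additive (\<lambda>v. lambda_q \<phi> v w))"
proof -
  have "lambda_q \<phi> (x + y) z = lambda_q \<phi> x z + lambda_q \<phi> y z \<longleftrightarrow>
      \<phi> (x + y + z) - \<phi> (x + y) - \<phi> (x + z) - \<phi> (y + z) + \<phi> x + \<phi> y + \<phi> z = 0" for x y z
  proof -
    have "lambda_q \<phi> (x + y) z - (lambda_q \<phi> x z + lambda_q \<phi> y z) =
        \<phi> (x + y + z) - \<phi> (x + y) - \<phi> (x + z) - \<phi> (y + z) + \<phi> x + \<phi> y + \<phi> z"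
      by (simp add: lambda_q_def algebra_simps)
    then show ?thesis
      by (metis eq_iff_diff_eq_0)
  qed
  then show ?thesis
    by (simp add: Quad0_def additive_def) blast
qed

lemma Quad0_if_lambda_q_in_forms_M:
  assumes "biadditive \<beta>" and "\<phi> 0 = 0" and "lambda_q \<phi> \<in> forms_M smul \<beta>"
  shows "\<phi> \<in> Quad0"
  using assms by (auto simp: Quad0_iff_lambda_q_additive forms_M_def beta_r_def
      biadditive_iff_additive)

lemma gen_subgroup_least:
  assumes "S \<subseteq> H" and "(\<lambda>_. 0) \<in> H"
    and "\<And>\<phi> \<psi>. \<phi> \<in> H \<Longrightarrow> \<psi> \<in> H \<Longrightarrow> (\<lambda>v. \<phi> v - \<psi> v) \<in> H"
  shows "gen_subgroup S \<subseteq> H"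
proof
  show "\<phi> \<in> H" if "\<phi> \<in> gen_subgroup S" for \<phi>
    using that by induction (use assms in auto)
qed

lemma phi_r_in_gen_subgroup:
  assumes "left_module_on rmul e smul"
    and "\<phi> \<in> gen_subgroup {phi_r smul \<phi>0 r | r. True}"
  shows "phi_r smul \<phi> s \<in> gen_subgroup {phi_r smul \<phi>0 r | r. True}"
proof -
  let ?G = "gen_subgroup {phi_r smul \<phi>0 r | r. True}"
  have shift: "phi_r smul (phi_r smul \<phi>0 r) s = phi_r smul \<phi>0 (rmul r s)" for r s
    by (simp add: phi_r_def left_module_on_assoc[OF assms(1)])
  then have "?G \<subseteq> {\<phi>. \<forall>s. phi_r smul \<phi> s \<in> ?G}"
  proof (intro gen_subgroup_least subsetI CollectI allI)
    show "phi_r smul \<phi> s \<in> ?G" if "\<phi> \<in> {phi_r smul \<phi>0 r | r. True}" for \<phi> s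
      using that shift by (auto intro: gen_subgroup.gen_base)
    show "phi_r smul (\<lambda>_. 0) s \<in> ?G" for s
      by (simp add: phi_r_def gen_subgroup.gen_zero)
    show "phi_r smul (\<lambda>v. \<phi> v - \<psi> v) s \<in> ?G"
      if "\<phi> \<in> {\<phi>. \<forall>s. phi_r smul \<phi> s \<in> ?G}" and "\<psi> \<in> {\<phi>. \<forall>s. phi_r smul \<phi> s \<in> ?G}"
      for \<phi> \<psi> s
      using gen_subgroup.gen_diff[of "phi_r smul \<phi> s" _ "phi_r smul \<psi> s"] that
      by (simp add: phi_r_def)
  qed
  then show ?thesis
    using assms(2) by blast
qed

lemma lambda_q_gen_subgroup_subset_forms_M:
  assumes "left_module_on rmul e smul" and "biadditive \<beta>"
    and "lambda_q ` S \<subseteq> forms_M smul \<beta>"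
  shows "lambda_q ` gen_subgroup S \<subseteq> forms_M smul \<beta>"
proof -
  have smul_add: "additive (\<lambda>r. smul r w)" for w
    using left_module_on_additive(2)[OF assms(1)] .
  have \<beta>_add: "additive (\<beta> v)" for v
    using assms(2) by (simp add: biadditive_iff_additive)
  have "lambda_q (\<lambda>_. 0) = beta_r smul \<beta> 0"
    by (simp add: lambda_q_def beta_r_def additive.zero[OF smul_add] additive.zero[OF \<beta>_add])
  moreover have "lambda_q (\<lambda>v. \<phi> v - \<psi> v) = beta_r smul \<beta> (r - s)"
    if "lambda_q \<phi> = beta_r smul \<beta> r" and "lambda_q \<psi> = beta_r smul \<beta> s" for \<phi> \<psi> r s
  proof (intro ext)
    fix v w
    have "lambda_q (\<lambda>v. \<phi> v - \<psi> v) v w = lambda_q \<phi> v w - lambda_q \<psi> v w"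
      by (simp add: lambda_q_def algebra_simps)
    then show "lambda_q (\<lambda>v. \<phi> v - \<psi> v) v w = beta_r smul \<beta> (r - s) v w"
      by (simp add: that beta_r_def additive.diff[OF smul_add] additive.diff[OF \<beta>_add])
  qed
  ultimately have "gen_subgroup S \<subseteq> {\<phi>. lambda_q \<phi> \<in> forms_M smul \<beta>}"
    using assms(3) by (intro gen_subgroup_least) (auto simp: forms_M_def)
  then show ?thesis
    by blast
qed

lemma form_ring_gen_subgroup_phi_r:
  assumes module: "left_module_on rmul e smul" and adm: "admissible smul \<beta>"
    and "\<phi>0 0 = 0"
    and lambda: "\<And>r. lambda_q (phi_r smul \<phi>0 r) \<in> forms_M smul \<beta>"
    and diag: "diag_form ` forms_M smul \<beta> \<subseteq> gen_subgroup {phi_r smul \<phi>0 r | r. True}"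
  shows "form_ring rmul e smul \<beta> (gen_subgroup {phi_r smul \<phi>0 r | r. True})"
proof -
  let ?S = "{phi_r smul \<phi>0 r | r. True}"
  have biadd: "biadditive \<beta>"
    using adm by (simp add: admissible_def)
  have lambda_gen: "lambda_q ` gen_subgroup ?S \<subseteq> forms_M smul \<beta>"
    using lambda by (intro lambda_q_gen_subgroup_subset_forms_M[OF module biadd]) blast
  have "smul r 0 = 0" for r
    using left_module_on_additive(1)[OF module] by (rule additive.zero)
  then have "gen_subgroup ?S \<subseteq> {\<phi>. \<phi> 0 = 0}"
    using \<open>\<phi>0 0 = 0\<close> by (intro gen_subgroup_least) (auto simp: phi_r_def)
  then have "gen_subgroup ?S \<subseteq> Quad0"
    using lambda_gen by (auto intro: Quad0_if_lambda_q_in_forms_M[OF biadd])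
  moreover have "is_subgroup_fun (gen_subgroup ?S)"
    by (simp add: is_subgroup_fun_def gen_subgroup.intros)
  ultimately show ?thesis
    unfolding form_ring_def
    using module adm diag lambda_gen phi_r_in_gen_subgroup[OF module] by blast
qed

section \<open>Finite fields of characteristic p\<close>

text \<open>This is \<open>finite_field_power_card_eq_same\<close>, which is only stated for the sort
  \<open>finite_field\<close>; a type variable of sort \<open>{field,finite}\<close> cannot be given that sort.\<close>
lemma power_card_eq_self:
  fixes x :: "'a::{field,finite}"
  shows "x ^ card (UNIV :: 'a set) = x"
proof (cases "x = 0")
  case False
  let ?U = "UNIV - {0 :: 'a}"
  have "bij_betw (\<lambda>y. x * y) ?U ?U"
    by (rule bij_betwI[of _ _ _ "\<lambda>y. y / x"]) (use False in auto)
  then have "(\<Prod>y\<in>?U. x * y) = \<Prod>?U"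
    by (rule prod.reindex_bij_betw)
  then have "x ^ card ?U = 1"
    by (simp add: prod.distrib)
  moreover have "card (UNIV :: 'a set) = Suc (card ?U)"
    using finite_UNIV_card_ge_0[where 'a = 'a] by (simp add: card_Diff_singleton)
  ultimately show ?thesis
    by (metis power_Suc mult_1_right)
qed (use finite_UNIV_card_ge_0[where 'a = 'a] in simp)

lemma card_roots_power_eq_affine_le:
  fixes c d :: "'a::idom"
  assumes "n \<ge> 2"
  shows "card {y. y ^ n = c * y + d} \<le> n"
proof -
  define P :: "'a poly" where "P = monom 1 n + [:- d, - c:]"
  have "degree P = n"
    unfolding P_def using assms by (subst degree_add_eq_left) (auto simp: degree_monom_eq)
  moreover have "{y. y ^ n = c * y + d} = {y. poly P y = 0}"
    by (auto simp: P_def poly_monom algebra_simps)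
  moreover have "P \<noteq> 0"
    using \<open>degree P = n\<close> assms by auto
  ultimately show ?thesis
    using card_poly_roots_bound[of P] by simp
qed

lemma trace_to_prime_add_length:
  "trace_to_prime p (m + n) x = trace_to_prime p m x + trace_to_prime p n (x ^ p ^ m)"
  by (induction n) (simp_all add: trace_to_prime_def power_add power_mult)

locale finite_field_char =
  fixes p :: nat
  assumes prime_p: "prime p" and CHAR_eq: "CHAR('a::{field,finite}) = p"
begin

lemma p_gt_1: "p > 1"
  using prime_p by (rule prime_gt_1_nat)

lemma additive_power_p_power: "additive (\<lambda>x :: 'a. x ^ p ^ k)"
  using freshmans_dream'[where 'a = 'a, of "p ^ k" k] prime_p CHAR_eq by (simp add: additive_def)

lemma of_nat_power_p: "(of_nat k :: 'a) ^ p = of_nat k"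
proof (induction k)
  case (Suc k)
  then show ?case
    using additive.add[OF additive_power_p_power[of 1], of "of_nat k" 1] by (simp add: add.commute)
qed (use p_gt_1 in simp)

lemma of_nat_eq_iff_mod: "(of_nat k :: 'a) = of_nat l \<longleftrightarrow> k mod p = l mod p"
  using of_nat_eq_iff_cong_CHAR[where 'a = 'a] CHAR_eq by (simp add: cong_def)

lemma power_p_eq_self_iff: "(y :: 'a) ^ p = y \<longleftrightarrow> (\<exists>k<p. y = of_nat k)"
proof -
  have sub: "of_nat ` {..<p} \<subseteq> {y :: 'a. y ^ p = y}"
    using of_nat_power_p by auto
  have "card (of_nat ` {..<p} :: 'a set) = p"
    by (subst card_image) (auto intro!: inj_onI simp: of_nat_eq_iff_mod)
  moreover have "card {y :: 'a. y ^ p = y} \<le> p"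
    using card_roots_power_eq_affine_le[of p 1 0] p_gt_1 by simp
  moreover have "card (of_nat ` {..<p} :: 'a set) \<le> card {y :: 'a. y ^ p = y}"
    using sub by (intro card_mono) auto
  ultimately have "of_nat ` {..<p} = {y :: 'a. y ^ p = y}"
    by (intro card_subset_eq[OF _ sub]) auto
  then have "y ^ p = y \<longleftrightarrow> y \<in> of_nat ` {..<p}"
    by blast
  then show ?thesis
    by blast
qed

lemma prime_field_nat_of_nat: "prime_field_nat p (of_nat k :: 'a) = k mod p"
  unfolding prime_field_nat_def using p_gt_1
  by (intro the_equality) (auto simp: of_nat_eq_iff_mod)

lemma fp_to_qz_of_nat: "fp_to_qz p (of_nat k :: 'a) = qz_of (of_nat k / of_nat p)"
proof -
  have "(of_nat k :: rat) = of_nat (k mod p) + of_nat p * of_nat (k div p)"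
    by (metis of_nat_add of_nat_mult mod_mult_div_eq)
  then have "of_nat k / of_nat p - of_nat (k mod p) / (of_nat p :: rat) = of_nat (k div p)"
    using p_gt_1 by (simp add: field_simps)
  then have "of_nat (k mod p) / of_nat p - of_nat k / (of_nat p :: rat) \<in> \<int>"
    by (metis Ints_minus Ints_of_nat minus_diff_eq)
  then show ?thesis
    by (simp add: fp_to_qz_def prime_field_nat_of_nat qz_of_eq_iff)
qed

lemma fp_to_qz_add:
  assumes "x ^ p = x" and "y ^ p = y"
  shows "fp_to_qz p (x + y :: 'a) = fp_to_qz p x + fp_to_qz p y"
proof -
  obtain k l where x: "x = of_nat k" and y: "y = of_nat l"
    using assms by (auto simp: power_p_eq_self_iff)
  then have "fp_to_qz p (x + y) = qz_of (of_nat (k + l) / of_nat p)"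
    by (metis fp_to_qz_of_nat of_nat_add)
  also have "\<dots> = qz_of (of_nat k / of_nat p) + qz_of (of_nat l / of_nat p)"
    by (simp add: add_divide_distrib qz_of_add)
  finally show ?thesis
    by (simp add: x y fp_to_qz_of_nat)
qed

lemma fp_to_qz_zero [simp]: "fp_to_qz p (0 :: 'a) = 0"
  using fp_to_qz_of_nat[of 0] by (simp add: qz_of_eq_0_iff)

lemma fp_to_qz_diff:
  assumes "x ^ p = x" and "y ^ p = y"
  shows "fp_to_qz p (x - y :: 'a) = fp_to_qz p x - fp_to_qz p y"
proof -
  have "(x - y) ^ p = x - y"
    using additive.diff[OF additive_power_p_power[of 1]] assms by simp
  then show ?thesis
    using fp_to_qz_add[of "x - y" y] assms by simp
qed

lemma fp_to_qz_sum:
  "(\<And>i. i \<in> A \<Longrightarrow> g i ^ p = g i) \<Longrightarrow>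
    fp_to_qz p (sum g A :: 'a) = (\<Sum>i\<in>A. fp_to_qz p (g i))"
proof (induction A rule: infinite_finite_induct)
  case (insert i A)
  have "sum g A ^ p = (\<Sum>i\<in>A. g i ^ p)"
    using additive.sum[OF additive_power_p_power[of 1]] by simp
  also have "\<dots> = sum g A"
    using insert.prems by (intro sum.cong) auto
  finally show ?case
    using insert by (simp add: fp_to_qz_add)
qed simp_all

lemma fp_to_qz_eq_0_iff:
  assumes "y ^ p = y"
  shows "fp_to_qz p (y :: 'a) = 0 \<longleftrightarrow> y = 0"
proof
  assume "fp_to_qz p y = 0"
  obtain k where k: "k < p" "y = of_nat k"
    using assms by (auto simp: power_p_eq_self_iff)
  then have "(of_nat k / of_nat p :: rat) \<in> \<int>"
    using \<open>fp_to_qz p y = 0\<close> by (simp add: fp_to_qz_of_nat qz_of_eq_0_iff)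
  then obtain z where z: "(of_nat k / of_nat p :: rat) = of_int z"
    by (auto elim: Ints_cases)
  have "0 \<le> (of_nat k / of_nat p :: rat)" and "(of_nat k / of_nat p :: rat) < 1"
    using k p_gt_1 by simp_all
  then have "z = 0"
    unfolding z by linarith
  then show "y = 0"
    using k z p_gt_1 by simp
qed simp

lemma additive_trace: "additive (trace_to_prime p n :: 'a \<Rightarrow> 'a)"
  using additive_power_p_power by (simp add: additive_def trace_to_prime_def sum.distrib)

lemma trace_power_p: "trace_to_prime p n (x :: 'a) ^ p = trace_to_prime p n (x ^ p)"
proof -
  have "trace_to_prime p n x ^ p = (\<Sum>i<n. (x ^ p ^ i) ^ p)"
    unfolding trace_to_prime_def using additive.sum[OF additive_power_p_power[of 1]] by simp
  also have "\<dots> = trace_to_prime p n (x ^ p)"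
    by (simp add: trace_to_prime_def mult.commute flip: power_mult)
  finally show ?thesis .
qed

lemma trace_power_p_eq_self:
  assumes "(x :: 'a) ^ p ^ n = x"
  shows "trace_to_prime p n x ^ p = trace_to_prime p n x"
proof -
  have one: "trace_to_prime p 1 y = y" for y :: 'a
    by (simp add: trace_to_prime_def)
  have "trace_to_prime p n x + trace_to_prime p 1 (x ^ p ^ n) =
      trace_to_prime p 1 x + trace_to_prime p n (x ^ p ^ 1)"
    by (metis trace_to_prime_add_length add.commute)
  then have "trace_to_prime p n (x ^ p) = trace_to_prime p n x"
    by (simp add: assms one)
  then show ?thesis
    by (simp add: trace_power_p)
qed

lemma trace_power_p_power:
  assumes "(x :: 'a) ^ p ^ n = x"
  shows "trace_to_prime p n (x ^ p ^ k) = trace_to_prime p n x"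
proof (induction k)
  case (Suc k)
  have "trace_to_prime p n (x ^ p ^ Suc k) = trace_to_prime p n ((x ^ p ^ k) ^ p)"
    by (simp add: mult.commute flip: power_mult)
  also have "\<dots> = trace_to_prime p n (x ^ p ^ k) ^ p"
    by (rule trace_power_p[symmetric])
  also have "\<dots> = trace_to_prime p n x ^ p"
    by (simp only: Suc.IH)
  also have "\<dots> = trace_to_prime p n x"
    using assms by (rule trace_power_p_eq_self)
  finally show ?case .
qed simp

text \<open>The trace is a polynomial of degree \<open>p\<^sup>n\<^sup>-\<^sup>1\<close>, so it cannot vanish on all \<open>p\<^sup>n\<close> elements.\<close>
lemma trace_nonzero:
  assumes "card (UNIV :: 'a set) = p ^ n" and "n > 0"
  shows "\<exists>z :: 'a. trace_to_prime p n z \<noteq> 0"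
proof (rule ccontr)
  assume all_zero: "\<not> ?thesis"
  define P :: "'a poly" where "P = (\<Sum>i<n. monom 1 (p ^ i))"
  have "coeff P (p ^ (n - 1)) = 1"
    using \<open>n > 0\<close> p_gt_1 by (simp add: P_def coeff_sum coeff_monom power_inject_exp sum.delta)
  then have "P \<noteq> 0"
    by auto
  have "degree P \<le> p ^ (n - 1)"
    unfolding P_def using p_gt_1
    by (intro degree_sum_le) (auto intro!: order.trans[OF degree_monom_le] power_increasing)
  also have "\<dots> < card (UNIV :: 'a set)"
    using assms p_gt_1 by (simp add: power_strict_increasing)
  finally have "card {z. poly P z = 0} < card (UNIV :: 'a set)"
    using card_poly_roots_bound[OF \<open>P \<noteq> 0\<close>] by linarith
  moreover have "{z. poly P z = 0} = UNIV"
    using all_zero by (simp add: P_def poly_sum poly_monom trace_to_prime_def)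
  ultimately show False
    by simp
qed

lemma additive_fp_to_qz_trace:
  assumes "card (UNIV :: 'a set) = p ^ n"
  shows "additive (\<lambda>x :: 'a. fp_to_qz p (trace_to_prime p n x))"
proof -
  have "trace_to_prime p n x ^ p = trace_to_prime p n x" for x :: 'a
    using power_card_eq_self[of x] assms by (simp add: trace_power_p_eq_self)
  then show ?thesis
    by (simp add: additive_def additive.add[OF additive_trace] fp_to_qz_add)
qed

end

section \<open>Finite fields of order \<open>q\<^sup>2\<close>\<close>

locale quadratic_finite_field =
  fixes p f :: nat
  assumes prime_p: "prime p" and card_eq: "card (UNIV :: 'a::{field,finite} set) = (p ^ f) ^ 2"
begin

abbreviation q :: nat where "q \<equiv> p ^ f"

lemma card_eq_p_power: "card (UNIV :: 'a set) = p ^ (2 * f)"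
  using card_eq by (simp add: power_mult mult.commute)

sublocale finite_field_char p
proof
  have "prime CHAR('a)"
    by (intro prime_CHAR_semidom finite_imp_CHAR_pos) simp
  moreover have "CHAR('a) dvd p ^ (2 * f)"
    using CHAR_dvd_CARD[where 'a = 'a] card_eq_p_power by simp
  ultimately show "CHAR('a) = p"
    using prime_p by (metis prime_dvd_power prime_nat_iff prime_gt_1_nat less_irrefl)
qed (fact prime_p)

lemma f_pos: "f > 0"
proof (rule ccontr)
  assume "\<not> f > 0"
  then have "card (UNIV :: 'a set) = 1"
    using card_eq by simp
  moreover have "card {0 :: 'a, 1} \<le> card (UNIV :: 'a set)"
    by (intro card_mono) auto
  ultimately show False
    by simp
qed

lemma q_ge_2: "q \<ge> 2"
  using p_gt_1 f_pos by (metis Suc_1 Suc_leI le_trans one_less_power power_one_right)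

lemma additive_power_q: "additive (\<lambda>x :: 'a. x ^ q)"
  by (rule additive_power_p_power)

lemma power_q_q [simp]: "((x :: 'a) ^ q) ^ q = x"
  using power_card_eq_self[of x] card_eq by (simp add: power2_eq_square power_mult[symmetric])

lemma power_p_2f [simp]: "(x :: 'a) ^ p ^ (2 * f) = x"
  using power_card_eq_self[of x] card_eq_p_power by simp

definition norm_Fq :: "'a \<Rightarrow> 'a" where "norm_Fq a = a * a ^ q"

lemma norm_Fq_power_q: "norm_Fq a ^ q = norm_Fq a"
  by (simp add: norm_Fq_def power_mult_distrib mult.commute)

lemma norm_Fq_add: "norm_Fq (a + c) = norm_Fq a + norm_Fq c + (a * c ^ q + c * a ^ q)"
  by (simp add: norm_Fq_def additive.add[OF additive_power_q] algebra_simps)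

text \<open>Counting: the norm maps the \<open>q\<^sup>2 - 1\<close> units onto nonzero elements of \<open>F\<^sub>q\<close> with fibres
  of size at most \<open>q + 1\<close>, so it must reach all \<open>q - 1\<close> of them.\<close>
lemma norm_Fq_surj:
  assumes "m ^ q = m"
  shows "\<exists>a. norm_Fq a = m"
proof (rule ccontr)
  assume not_norm: "\<not> ?thesis"
  define S where "S = {y :: 'a. y ^ q = y}"
  have "0 \<in> S" "m \<in> S" "m \<noteq> 0"
    using assms not_norm p_gt_1 by (auto simp: S_def norm_Fq_def)
  have "UNIV - {0} \<subseteq> (\<Union>n\<in>S - {0, m}. {a :: 'a. a ^ Suc q = n})"
    using norm_Fq_power_q not_norm by (auto simp: S_def norm_Fq_def)
  then have "card (UNIV - {0 :: 'a}) \<le> card (\<Union>n\<in>S - {0, m}. {a :: 'a. a ^ Suc q = n})"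
    by (intro card_mono) auto
  also have "\<dots> \<le> (\<Sum>n\<in>S - {0, m}. card {a :: 'a. a ^ Suc q = n})"
    by (rule card_UN_le) simp
  also have "\<dots> \<le> (\<Sum>n\<in>S - {0, m}. Suc q)"
    using card_roots_power_eq_affine_le[of "Suc q" 0] q_ge_2 by (intro sum_mono) simp
  also have "\<dots> = (card S - 2) * Suc q"
    using \<open>0 \<in> S\<close> \<open>m \<in> S\<close> \<open>m \<noteq> 0\<close> by (simp add: card_Diff_subset numeral_2_eq_2)
  also have "\<dots> \<le> (q - 2) * Suc q"
    using card_roots_power_eq_affine_le[of q 1 0] q_ge_2
    by (intro mult_right_mono diff_le_mono) (simp_all add: S_def)
  finally have "card (UNIV - {0 :: 'a}) \<le> (q - 2) * Suc q" .
  moreover have "card (UNIV - {0 :: 'a}) = q * q - 1"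
    using card_eq by (simp add: card_Diff_singleton power2_eq_square)
  moreover obtain r where "q = r + 2"
    using q_ge_2 by (metis le_add_diff_inverse2)
  ultimately show False
    by (simp add: algebra_simps)
qed

definition trace_char :: "'a \<Rightarrow> qz" where
  "trace_char x = fp_to_qz p (trace_to_prime p (2 * f) x)"

lemma additive_trace_char: "additive trace_char"
  unfolding trace_char_def[abs_def] using card_eq_p_power by (rule additive_fp_to_qz_trace)

lemma trace_char_power_q: "trace_char (x ^ q) = trace_char x"
  by (simp add: trace_char_def trace_power_p_power)

lemma trace_char_nondegenerate:
  assumes "x \<noteq> 0"
  shows "\<exists>y. trace_char (x * y) \<noteq> 0"
proof -
  obtain z :: 'a where "trace_to_prime p (2 * f) z \<noteq> 0"
    using trace_nonzero[OF card_eq_p_power] f_pos by auto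
  then have "trace_char (x * (z / x)) \<noteq> 0"
    using assms by (simp add: trace_char_def fp_to_qz_eq_0_iff trace_power_p_eq_self)
  then show ?thesis
    by blast
qed

lemma trace_char_eq_trace_Fq: "trace_char z = fp_to_qz p (trace_to_prime p f (z + z ^ q))"
  using trace_to_prime_add_length[of p f f z]
  by (simp add: trace_char_def mult_2 additive.add[OF additive_trace])

section \<open>The form ring over \<open>R = F + F u\<close>\<close>

lemma Rmult_Pair [simp]: "Rmult q (a, b) (c, d) = (a * c, a * d + b * c ^ q)"
  by (simp add: Rmult_def)

lemma left_module_on_R: "left_module_on (Rmult q) (Rone :: 'a \<times> 'a) (Rmult q)"
  unfolding left_module_on_def ring_on_def
  by (auto simp: Rmult_def Rone_def power_mult_distrib additive.add[OF additive_power_q]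
      algebra_simps)

lemma beta_R_Pair [simp]: "beta_R p f (a', b') (a, b) = trace_char (a * b' - a' * b)"
  by (simp add: beta_R_def trace_char_def)

lemma trace_char_add_eqI: "x = y + z \<Longrightarrow> trace_char x = trace_char y + trace_char z"
  by (simp add: additive.add[OF additive_trace_char])

lemma additive_beta_R_left: "additive (\<lambda>v. beta_R p f v (w :: 'a \<times> 'a))"
  unfolding additive_def
proof (intro allI)
  fix x y :: "'a \<times> 'a"
  show "beta_R p f (x + y) w = beta_R p f x w + beta_R p f y w"
    by (cases x, cases y, cases w) (simp, rule trace_char_add_eqI, simp add: algebra_simps)
qed

lemma additive_beta_R_right: "additive (beta_R p f (v :: 'a \<times> 'a))"
  unfolding additive_def
proof (intro allI)
  fix x y :: "'a \<times> 'a"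
  show "beta_R p f v (x + y) = beta_R p f v x + beta_R p f v y"
    by (cases x, cases y, cases v) (simp, rule trace_char_add_eqI, simp add: algebra_simps)
qed

lemma biadditive_beta_R: "biadditive (beta_R p f :: 'a \<times> 'a \<Rightarrow> _)"
  by (simp add: biadditive_iff_additive additive_beta_R_left additive_beta_R_right)

lemma beta_R_swap: "beta_R p f v w = beta_R p f w (- v :: 'a \<times> 'a)"
  by (cases v, cases w) (simp add: algebra_simps)

lemma beta_R_adjoint_J:
  "beta_R p f (Rmult q r v) w = beta_R p f (v :: 'a \<times> 'a) (Rmult q (J_R q r) w)"
proof -
  obtain r1 r2 a' b' a b where r: "r = (r1, r2)" and v: "v = (a', b')" and w: "w = (a, b)"
    by (cases r, cases v, cases w) simp
  have "beta_R p f (Rmult q r v) w = trace_char (r1 * (a * b' - a' * b) + a * r2 * a' ^ q)"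
    by (simp add: r v w algebra_simps)
  also have "\<dots> = trace_char (r1 * (a * b' - a' * b)) + trace_char (a * r2 * a' ^ q)"
    by (rule trace_char_add_eqI) simp
  also have "trace_char (a * r2 * a' ^ q) = trace_char (a' * r2 ^ q * a ^ q)"
    using trace_char_power_q[of "a * r2 * a' ^ q"] by (simp add: power_mult_distrib mult_ac)
  also have "trace_char (r1 * (a * b' - a' * b)) + \<dots> =
      trace_char (r1 * (a * b' - a' * b) + a' * r2 ^ q * a ^ q)"
    by (rule trace_char_add_eqI[symmetric]) simp
  also have "\<dots> = beta_R p f v (Rmult q (J_R q r) w)"
    by (simp add: r v w J_R_def algebra_simps)
  finally show ?thesis .
qed

lemma beta_R_nondegenerate_left:
  assumes "(v :: 'a \<times> 'a) \<noteq> 0"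
  shows "\<exists>w. beta_R p f v w \<noteq> 0"
proof -
  obtain a b where v: "v = (a, b)"
    by (cases v)
  show ?thesis
  proof (cases "b = 0")
    case False
    then obtain y where "trace_char (b * y) \<noteq> 0"
      using trace_char_nondegenerate by blast
    then have "beta_R p f v (y, 0) \<noteq> 0"
      by (simp add: v mult.commute)
    then show ?thesis
      by blast
  next
    case True
    then obtain y where "trace_char (a * y) \<noteq> 0"
      using assms trace_char_nondegenerate[of a] by (auto simp: v zero_prod_def)
    then have "beta_R p f v (0, - y) \<noteq> 0"
      by (simp add: v True)
    then show ?thesis
      by blast
  qed
qed

lemma beta_R_nondegenerate_right:
  "(w :: 'a \<times> 'a) \<noteq> 0 \<Longrightarrow> \<exists>v. beta_R p f v w \<noteq> 0"
  using beta_R_nondegenerate_left[of w] beta_R_swap[of "- _" w] by (metis minus_minus)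

lemma admissible_R: "admissible (Rmult q) (beta_R p f :: 'a \<times> 'a \<Rightarrow> _)"
  using left_module_on_R biadditive_beta_R beta_R_nondegenerate_left beta_R_nondegenerate_right
    beta_R_swap beta_R_adjoint_J
  by (rule admissible_regular_if_nondegenerate)

text \<open>\<open>phi0_R p f = norm_form 1\<close>; the \<open>\<phi>\<^sub>0[r]\<close> and the diagonals of the forms \<open>\<beta>\<^sub>r\<close> are all
  of this shape.\<close>
definition norm_form :: "'a \<Rightarrow> 'a \<times> 'a \<Rightarrow> qz" where
  "norm_form m v = fp_to_qz p (trace_to_prime p f (m * norm_Fq (fst v)))"

lemma phi_r_phi0_R: "phi_r (Rmult q) (phi0_R p f) r = norm_form (norm_Fq (fst r))"
proof (intro ext)
  fix v :: "'a \<times> 'a"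
  show "phi_r (Rmult q) (phi0_R p f) r v = norm_form (norm_Fq (fst r)) v"
    by (cases r, cases v)
      (simp add: phi_r_def phi0_R_def norm_form_def norm_Fq_def power_mult_distrib mult_ac)
qed

lemma trace_mult_norm_Fq_power_p:
  "m ^ q = m \<Longrightarrow> trace_to_prime p f (m * norm_Fq a) ^ p = trace_to_prime p f (m * norm_Fq a)"
  by (simp add: trace_power_p_eq_self power_mult_distrib norm_Fq_power_q)

lemma lambda_q_norm_form:
  assumes "m ^ q = m"
  shows "lambda_q (norm_form m) = beta_r (Rmult q) (beta_R p f) (0, - m)"
proof (intro ext)
  fix v w :: "'a \<times> 'a"
  obtain a b c d where v: "v = (a, b)" and w: "w = (c, d)"
    by (cases v, cases w)
  let ?T = "trace_to_prime p f"
  have "lambda_q (norm_form m) v w =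
      fp_to_qz p (?T (m * norm_Fq (a + c)) - ?T (m * norm_Fq a) - ?T (m * norm_Fq c))"
    using trace_mult_norm_Fq_power_p[OF assms] additive.diff[OF additive_power_p_power[of 1]]
    by (simp add: lambda_q_def norm_form_def v w fp_to_qz_diff)
  also have "?T (m * norm_Fq (a + c)) - ?T (m * norm_Fq a) - ?T (m * norm_Fq c) =
      ?T (m * a * c ^ q + (m * a * c ^ q) ^ q)"
    using assms by (simp add: norm_Fq_add power_mult_distrib algebra_simps
        flip: additive.add[OF additive_trace] additive.diff[OF additive_trace])
  also have "fp_to_qz p \<dots> = trace_char (m * a * c ^ q)"
    by (simp add: trace_char_eq_trace_Fq)
  also have "\<dots> = beta_r (Rmult q) (beta_R p f) (0, - m) v w"
    by (simp add: beta_r_def v w mult_ac)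
  finally show "lambda_q (norm_form m) v w = beta_r (Rmult q) (beta_R p f) (0, - m) v w" .
qed

lemma diag_form_beta_r_R:
  "diag_form (beta_r (Rmult q) (beta_R p f) r) = norm_form (- snd r - snd r ^ q)"
proof (intro ext)
  fix v :: "'a \<times> 'a"
  obtain a b r1 r2 where v: "v = (a, b)" and r: "r = (r1, r2)"
    by (cases v, cases r)
  have "(- (r2 * norm_Fq a)) + (- (r2 * norm_Fq a)) ^ q = (- r2 - r2 ^ q) * norm_Fq a"
    using additive.minus[OF additive_power_q]
    by (simp add: power_mult_distrib norm_Fq_power_q algebra_simps)
  then have "trace_char (- (r2 * norm_Fq a)) = norm_form (- r2 - r2 ^ q) v"
    by (simp add: trace_char_eq_trace_Fq norm_form_def v)
  then show "diag_form (beta_r (Rmult q) (beta_R p f) r) v = norm_form (- snd r - snd r ^ q) v"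
    by (simp add: diag_form_def beta_r_def v r norm_Fq_def algebra_simps)
qed

lemma diag_form_subset_Phi_R:
  "diag_form ` forms_M (Rmult q) (beta_R p f :: 'a \<times> 'a \<Rightarrow> _) \<subseteq> Phi_R p f"
proof (intro image_subsetI)
  fix m :: "'a \<times> 'a \<Rightarrow> 'a \<times> 'a \<Rightarrow> qz"
  assume "m \<in> forms_M (Rmult q) (beta_R p f)"
  then obtain r where m: "m = beta_r (Rmult q) (beta_R p f) r"
    by (auto simp: forms_M_def)
  have "(- snd r - snd r ^ q) ^ q = - snd r - snd r ^ q"
    using additive.diff[OF additive_power_q] additive.minus[OF additive_power_q] by simp
  then obtain a where "norm_Fq a = - snd r - snd r ^ q"
    using norm_Fq_surj by blast
  then have "diag_form m = phi_r (Rmult q) (phi0_R p f) (a, 0)"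
    by (simp add: m diag_form_beta_r_R phi_r_phi0_R)
  then show "diag_form m \<in> Phi_R p f"
    unfolding Phi_R_def by (auto intro: gen_subgroup.gen_base)
qed

lemma form_ring_R:
  "form_ring (Rmult q) (Rone :: 'a \<times> 'a) (Rmult q) (beta_R p f) (Phi_R p f)"
  unfolding Phi_R_def
proof (rule form_ring_gen_subgroup_phi_r[OF left_module_on_R admissible_R])
  show "phi0_R p f (0 :: 'a \<times> 'a) = 0"
    using p_gt_1 by (simp add: phi0_R_def additive.zero[OF additive_trace])
  show "lambda_q (phi_r (Rmult q) (phi0_R p f) r) \<in> forms_M (Rmult q) (beta_R p f)"
    for r :: "'a \<times> 'a"
    by (simp add: phi_r_phi0_R lambda_q_norm_form norm_Fq_power_q forms_M_def)
qed (use diag_form_subset_Phi_R in \<open>simp add: Phi_R_def\<close>)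

section \<open>Codes of Type \<open>\<rho>\<close>\<close>

lemma Rmult_Rconj:
  "Rmult q x (Rconj q c) = (fst x * fst c ^ q, snd x * fst c - fst x * snd c :: 'a)"
  by (simp add: Rmult_def Rconj_def)

lemma beta_R_Rmult_eq_beta_R_Rconj:
  "beta_R p f x (Rmult q s c) = beta_R p f (Rmult q x (Rconj q c)) (s :: 'a \<times> 'a)"
  by (cases x, cases s, cases c) (simp add: Rmult_Rconj algebra_simps)

lemma sum_beta_R_Rmult:
  "(\<Sum>i\<in>A. beta_R p f (x i) (Rmult q s (c i))) =
    beta_R p f (\<Sum>i\<in>A. Rmult q (x i) (Rconj q (c i))) (s :: 'a \<times> 'a)"
  by (simp add: beta_R_Rmult_eq_beta_R_Rconj additive.sum[OF additive_beta_R_left])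

lemma orthogonal_beta_R_eq_herm_dual:
  fixes C :: "('n::finite \<Rightarrow> 'a \<times> 'a) set"
  assumes "left_submodule (Rmult q) C"
  shows "{x. \<forall>c\<in>C. (\<Sum>i\<in>UNIV. beta_R p f (x i) (c i)) = 0} = herm_dual q C"
proof (rule Set.set_eqI, rule iffI)
  fix x
  assume x: "x \<in> {x. \<forall>c\<in>C. (\<Sum>i\<in>UNIV. beta_R p f (x i) (c i)) = 0}"
  show "x \<in> herm_dual q C"
    unfolding herm_dual_def
  proof (intro CollectI ballI)
    fix c
    assume "c \<in> C"
    then have "(\<lambda>i. Rmult q s (c i)) \<in> C" for s
      using assms unfolding left_submodule_def by blast
    then have "beta_R p f (\<Sum>i\<in>UNIV. Rmult q (x i) (Rconj q (c i))) s = 0" for s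
      using x by (simp flip: sum_beta_R_Rmult)
    then show "(\<Sum>i\<in>UNIV. Rmult q (x i) (Rconj q (c i))) = 0"
      using beta_R_nondegenerate_left by blast
  qed
next
  fix x
  assume x: "x \<in> herm_dual q C"
  have Rone_mult: "Rmult q Rone y = y" for y :: "'a \<times> 'a"
    by (simp add: Rmult_def Rone_def)
  show "x \<in> {x. \<forall>c\<in>C. (\<Sum>i\<in>UNIV. beta_R p f (x i) (c i)) = 0}"
  proof (intro CollectI ballI)
    fix c
    assume "c \<in> C"
    then have "(\<Sum>i\<in>UNIV. Rmult q (x i) (Rconj q (c i))) = 0"
      using x by (simp add: herm_dual_def)
    then have "(\<Sum>i\<in>UNIV. beta_R p f (x i) (Rmult q Rone (c i))) = 0"
      by (simp add: sum_beta_R_Rmult additive.zero[OF additive_beta_R_left] del: Rmult_Pair)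
    then show "(\<Sum>i\<in>UNIV. beta_R p f (x i) (c i)) = 0"
      by (simp add: Rone_mult)
  qed
qed

lemma sum_Phi_R_eq_0:
  assumes "(\<Sum>i\<in>A. norm_Fq (fst (c i))) = 0" and "\<phi> \<in> Phi_R p f"
  shows "(\<Sum>i\<in>A. \<phi> (c i)) = 0"
proof -
  have "(\<Sum>i\<in>A. norm_form m (c i)) = 0" if "m ^ q = m" for m
  proof -
    have "(\<Sum>i\<in>A. norm_form m (c i)) =
        fp_to_qz p (\<Sum>i\<in>A. trace_to_prime p f (m * norm_Fq (fst (c i))))"
      using trace_mult_norm_Fq_power_p[OF that] by (simp add: norm_form_def fp_to_qz_sum)
    also have "\<dots> = fp_to_qz p (trace_to_prime p f (m * (\<Sum>i\<in>A. norm_Fq (fst (c i)))))"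
      by (simp add: sum_distrib_left additive.sum[OF additive_trace])
    finally show ?thesis
      using assms(1) by (simp add: additive.zero[OF additive_trace])
  qed
  then have "Phi_R p f \<subseteq> {\<phi>. (\<Sum>i\<in>A. \<phi> (c i)) = 0}"
    unfolding Phi_R_def
    by (intro gen_subgroup_least) (auto simp: phi_r_phi0_R norm_Fq_power_q sum_subtractf)
  then show ?thesis
    using assms(2) by blast
qed

lemma code_of_type_iff_herm_self_dual:
  fixes C :: "('n::finite \<Rightarrow> 'a \<times> 'a) set"
  assumes "left_submodule (Rmult q) C"
  shows "is_code_of_type (Rmult q) (beta_R p f) (Phi_R p f) C \<longleftrightarrow> C = herm_dual q C"
proof -
  have "(\<Sum>i\<in>UNIV. \<phi> (c i)) = 0" if "C = herm_dual q C" "c \<in> C" "\<phi> \<in> Phi_R p f" for c \<phi>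
  proof (rule sum_Phi_R_eq_0[OF _ \<open>\<phi> \<in> Phi_R p f\<close>])
    have "(\<Sum>i\<in>UNIV. Rmult q (c i) (Rconj q (c i))) = 0"
      using that unfolding herm_dual_def by blast
    moreover have "(\<Sum>i\<in>UNIV. norm_Fq (fst (c i))) =
        fst (\<Sum>i\<in>UNIV. Rmult q (c i) (Rconj q (c i)))"
      by (simp add: fst_sum Rmult_Rconj norm_Fq_def del: Rmult_Pair)
    ultimately show "(\<Sum>i\<in>UNIV. norm_Fq (fst (c i))) = 0"
      by simp
  qed
  then show ?thesis
    using orthogonal_beta_R_eq_herm_dual[OF assms] assms
    by (auto simp: is_code_of_type_def)
qed

end

theorem mainTheorem8:
  fixes p f :: nat
    and C :: "('n::finite \<Rightarrow> 'a::{field,finite} \<times> 'a) set"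
  assumes "prime p"
    and "card (UNIV :: 'a set) = (p ^ f) ^ 2"
  shows "form_ring (Rmult (p ^ f)) (Rone :: 'a \<times> 'a) (Rmult (p ^ f)) (beta_R p f) (Phi_R p f)
    \<and> (\<forall>r v w :: 'a \<times> 'a.
         beta_R p f (Rmult (p ^ f) r v) w = beta_R p f v (Rmult (p ^ f) (J_R (p ^ f) r) w))
    \<and> (\<forall>v w :: 'a \<times> 'a. beta_R p f v w = beta_R p f w (- v))
    \<and> (left_submodule (Rmult (p ^ f)) C \<longrightarrow>
         (is_code_of_type (Rmult (p ^ f)) (beta_R p f) (Phi_R p f) C \<longleftrightarrow> C = herm_dual (p ^ f) C))"
proof -
  interpret quadratic_finite_field p f
    using assms by unfold_locales
  show ?thesis
    using form_ring_R beta_R_adjoint_J beta_R_swap code_of_type_iff_herm_self_dual by blast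
qed

end
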